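(* Let $\mathcal{X}=\mathbb{R}^3$ with the Euclidean topology, partially ordered by the cone $\mathbb{R}^3_+$. There exist a set $\mathcal{A}\subset\mathbb{R}^3$, a linear subspace $\mathcal{M}\subset\mathbb{R}^3$ and a linear functional $\pi:\mathcal{M}\to\mathbb{R}$ such that $(\mathcal{A},\mathcal{M},\pi)$ is admissible (in the sense defined in the context) and the optimal set mapping $E:\mathbb{R}^3\rightrightarrows\mathcal{M}$ fails to be lower semicontinuous at some point $x\in\mathbb{R}^3$, while $E$ nevertheless admits a continuous selection, i.e. there is a continuous map $s:\mathbb{R}^3\to\mathcal{M}$ with $s(x)\in E(x)$ for every $x\in\mathbb{R}^3$.
   Context: Given a set $\mathcal{A}\subset\mathbb{R}^3$ (acceptable positions), a linear subspace $\mathcal{M}\subset\mathbb{R}^3$ (payoffs, with the relative topology) and a linear functional $\pi:\mathcal{M}\to\mathbb{R}$ (price), define the risk measure $\rho:\mathbb{R}^3\to[-\infty,+\infty]$ by $\rho(x)=\inf\{\pi(z)\,;\ z\in\mathcal{M},\ z+x\in\mathcal{A}\}$ and the optimal set mapping $E:\mathbb{R}^3\rightrightarrows\mathcal{M}$ by $E(x)=\{z\in\mathcal{M}\,;\ z+x\in\mathcal{A},\ \pi(z)=\rho(x)\}$. The triple $(\mathcal{A},\mathcal{M},\pi)$ is called admissible if: (R1) $\mathcal{A}$ is closed, convex, contains $0$, and is monotone: $x\in\mathcal{A}$ and $y-x\in\mathbb{R}^3_+$ imply $y\in\mathcal{A}$; (R2) there is no arbitrage: every $z\in\mathcal{M}\cap\mathbb{R}^3_+$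 with $z\neq0$ satisfies $\pi(z)>0$; (R3) $\rho$ is finite-valued and continuous on $\mathbb{R}^3$. The map $E$ is lower semicontinuous at $x$ if for every open set $\mathcal{U}\subset\mathcal{M}$ with $E(x)\cap\mathcal{U}\neq\emptyset$ there is a neighborhood $\mathcal{U}_x$ of $x$ in $\mathbb{R}^3$ such that $E(y)\cap\mathcal{U}\neq\emptyset$ for all $y\in\mathcal{U}_x$. *)

theory Defs
  imports "HOL-Analysis.Analysis"
begin

definition nonneg3 :: "real^3 \<Rightarrow> bool" where
  "nonneg3 x \<longleftrightarrow> (\<forall>i. 0 \<le> x $ i)"

text \<open>A linear functional defined on the subspace M (only its values on M matter).\<close>
definition linear_functional_on :: "(real^3) set \<Rightarrow> (real^3 \<Rightarrow> real) \<Rightarrow> bool" where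
  "linear_functional_on M p \<longleftrightarrow>
     (\<forall>x\<in>M. \<forall>y\<in>M. p (x + y) = p x + p y) \<and> (\<forall>c. \<forall>x\<in>M. p (c *\<^sub>R x) = c * p x)"

definition rho :: "(real^3) set \<Rightarrow> (real^3) set \<Rightarrow> (real^3 \<Rightarrow> real) \<Rightarrow> real^3 \<Rightarrow> ereal" where
  "rho A M p x = Inf {ereal (p z) | z. z \<in> M \<and> z + x \<in> A}"

definition optset :: "(real^3) set \<Rightarrow> (real^3) set \<Rightarrow> (real^3 \<Rightarrow> real) \<Rightarrow> real^3 \<Rightarrow> (real^3) set" where
  "optset A M p x = {z \<in> M. z + x \<in> A \<and> ereal (p z) = rho A M p x}"

definition admissible :: "(real^3) set \<Rightarrow> (real^3) set \<Rightarrow> (real^3 \<Rightarrow> real) \<Rightarrow> bool" where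
  "admissible A M p \<longleftrightarrow>
     subspace M \<and> linear_functional_on M p \<and>
     \<comment> \<open>(R1)\<close>
     closed A \<and> convex A \<and> 0 \<in> A \<and> (\<forall>x y. x \<in> A \<and> nonneg3 (y - x) \<longrightarrow> y \<in> A) \<and>
     \<comment> \<open>(R2)\<close>
     (\<forall>z\<in>M. nonneg3 z \<and> z \<noteq> 0 \<longrightarrow> p z > 0) \<and>
     \<comment> \<open>(R3)\<close>
     (\<forall>x. rho A M p x \<noteq> \<infinity> \<and> rho A M p x \<noteq> -\<infinity>) \<and>
     continuous_on UNIV (\<lambda>x. real_of_ereal (rho A M p x))"

definition lsc_at :: "(real^3) set \<Rightarrow> (real^3 \<Rightarrow> (real^3) set) \<Rightarrow> real^3 \<Rightarrow> bool" where
  "lsc_at M F x \<longleftrightarrow>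
     (\<forall>U. openin (top_of_set M) U \<and> F x \<inter> U \<noteq> {} \<longrightarrow>
        (\<exists>V. open V \<and> x \<in> V \<and> (\<forall>y\<in>V. F y \<inter> U \<noteq> {})))"

end

theory Submission
  imports Defs
begin

text \<open>The acceptance set is a rotated second-order cone in the coordinates
\<open>(y\<^sub>1 + y\<^sub>2, 1 + y\<^sub>2, max 0 (-y\<^sub>3))\<close>, the payoffs are the plane \<open>z\<^sub>3 = 0\<close> priced by
\<open>z\<^sub>1 + z\<^sub>2\<close>. Adding a payoff to \<open>x\<close> leaves \<open>x\<^sub>3\<close> unchanged and costs the increase of \<open>y\<^sub>1 + y\<^sub>2\<close>; the cheapest acceptable value \<open>\<sigma>\<close> of \<open>y\<^sub>1 + y\<^sub>2\<close> solves \<open>\<sigma> (1 + \<sigma>) = max 0 (-x\<^sub>3)\<^sup>2\<close>, reached with \<open>y\<^sub>1 = 0\<close>. Hence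
\<open>\<rho>(x) = \<sigma> - x\<^sub>1 - x\<^sub>2\<close> is continuous and \<open>x \<mapsto> (-x\<^sub>1, \<sigma> - x\<^sub>2, 0)\<close> is a continuous
selection of optimal payoffs. For \<open>x\<^sub>3 < 0\<close> we have \<open>\<sigma> > 0\<close> and this optimum is unique, but at
\<open>x = 0\<close> every \<open>(t, -t, 0)\<close> with \<open>0 \<le> t \<le> 1\<close> is optimal; the optima with \<open>t > 0\<close> cannot be
approached from \<open>x\<^sub>3 < 0\<close>, so the optimal set mapping is not lower semicontinuous at \<open>0\<close>.\<close>

text \<open>The \<open>\<sigma>\<close> above: the nonnegative root of \<open>\<sigma> (1 + \<sigma>) = a\<^sup>2\<close>.\<close>

definition hroot :: "real \<Rightarrow> real" where
  "hroot a = (sqrt (1 + 4 * a\<^sup>2) - 1) / 2"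

lemma hroot_nonneg: "0 \<le> hroot a"
  unfolding hroot_def by (simp add: real_le_rsqrt)

lemma hroot_eq: "hroot a * (1 + hroot a) = a\<^sup>2"
proof -
  have "(sqrt (1 + 4 * a\<^sup>2))\<^sup>2 = 1 + 4 * a\<^sup>2" by simp
  then show ?thesis unfolding hroot_def by (simp add: field_simps power2_eq_square)
qed

lemma hroot_le:
  assumes "0 \<le> s" and "a\<^sup>2 \<le> s * (1 + s)"
  shows "hroot a \<le> s"
proof (rule ccontr)
  assume "\<not> hroot a \<le> s"
  then have "s * (1 + s) < hroot a * (1 + hroot a)"
    using assms(1) by (intro mult_strict_mono) auto
  then show False using hroot_eq[of a] assms(2) by simp
qed

lemma hroot_pos: "a \<noteq> 0 \<Longrightarrow> 0 < hroot a"
  using hroot_eq[of a] hroot_nonneg[of a] by (cases "hroot a = 0") auto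

lemma hroot_0 [simp]: "hroot 0 = 0"
  unfolding hroot_def by simp

lemma continuous_on_hroot [continuous_intros]:
  "continuous_on S f \<Longrightarrow> continuous_on S (\<lambda>x. hroot (f x))"
  unfolding hroot_def by (intro continuous_intros) auto

text \<open>Convexity of the rotated second-order cone \<open>{(s, v, q). 0 \<le> s \<and> 0 \<le> v \<and> q\<^sup>2 \<le> s v}\<close>.\<close>

lemma sq_le_mult_conic_comb:
  fixes s1 v1 s2 v2 q1 q2 l m :: real
  assumes "0 \<le> s1" "0 \<le> v1" "0 \<le> s2" "0 \<le> v2"
    and q1: "q1\<^sup>2 \<le> s1 * v1" and q2: "q2\<^sup>2 \<le> s2 * v2"
    and "0 \<le> l" "0 \<le> m"
  shows "(l * q1 + m * q2)\<^sup>2 \<le> (l * s1 + m * s2) * (l * v1 + m * v2)"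
proof -
  have "(q1 * q2)\<^sup>2 \<le> (s1 * v2) * (s2 * v1)"
    using mult_mono[OF q1 q2] assms by (simp add: power_mult_distrib algebra_simps)
  moreover have "4 * ((s1 * v2) * (s2 * v1)) \<le> (s1 * v2 + s2 * v1)\<^sup>2"
    using sum_squares_ge_zero[of "s1 * v2 - s2 * v1" 0] by (simp add: power2_eq_square algebra_simps)
  ultimately have "(2 * (q1 * q2))\<^sup>2 \<le> (s1 * v2 + s2 * v1)\<^sup>2"
    by (simp add: power_mult_distrib)
  then have cross: "2 * (q1 * q2) \<le> s1 * v2 + s2 * v1"
    by (rule power2_le_imp_le) (use assms in simp)
  have "(l * q1 + m * q2)\<^sup>2 = l\<^sup>2 * q1\<^sup>2 + m\<^sup>2 * q2\<^sup>2 + (l * m) * (2 * (q1 * q2))"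
    by (simp add: power2_eq_square algebra_simps)
  also have "\<dots> \<le> l\<^sup>2 * (s1 * v1) + m\<^sup>2 * (s2 * v2) + (l * m) * (s1 * v2 + s2 * v1)"
    using q1 q2 cross assms by (intro add_mono mult_left_mono) auto
  also have "\<dots> = (l * s1 + m * s2) * (l * v1 + m * v2)"
    by (simp add: power2_eq_square algebra_simps)
  finally show ?thesis .
qed

definition neg_part3 :: "real^3 \<Rightarrow> real" where
  "neg_part3 y = max 0 (- y $ 3)"

definition ex_acc :: "(real^3) set" where
  "ex_acc = {y. 0 \<le> y $ 1 \<and> 0 \<le> y $ 1 + y $ 2 \<and> 0 \<le> 1 + y $ 2 \<and>
                (neg_part3 y)\<^sup>2 \<le> (y $ 1 + y $ 2) * (1 + y $ 2)}"

definition ex_payoffs :: "(real^3) set" where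
  "ex_payoffs = {z. z $ 3 = 0}"

definition ex_price :: "real^3 \<Rightarrow> real" where
  "ex_price z = z $ 1 + z $ 2"

definition ex_risk :: "real^3 \<Rightarrow> real" where
  "ex_risk x = hroot (neg_part3 x) - x $ 1 - x $ 2"

definition ex_sel :: "real^3 \<Rightarrow> real^3" where
  "ex_sel x = (\<chi> i. if i = 1 then - x $ 1 else if i = 2 then hroot (neg_part3 x) - x $ 2 else 0)"

lemma neg_part3_nonneg: "0 \<le> neg_part3 y"
  unfolding neg_part3_def by simp

lemma continuous_on_neg_part3 [continuous_intros]: "continuous_on S neg_part3"
  unfolding neg_part3_def by (intro continuous_intros)

lemma neg_part3_add_payoff: "z \<in> ex_payoffs \<Longrightarrow> neg_part3 (z + x) = neg_part3 x"
  unfolding neg_part3_def ex_payoffs_def by simp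

lemma closed_ex_acc: "closed ex_acc"
  unfolding ex_acc_def by (intro closed_Collect_conj closed_Collect_le continuous_intros)

lemma convex_ex_acc: "convex ex_acc"
  unfolding convex_def
proof (intro ballI allI impI)
  fix x y :: "real^3" and u v :: real
  assume x: "x \<in> ex_acc" and y: "y \<in> ex_acc" and uv: "0 \<le> u" "0 \<le> v" "u + v = 1"
  define w where "w = u *\<^sub>R x + v *\<^sub>R y"
  have w: "w $ i = u * x $ i + v * y $ i" for i
    unfolding w_def by simp
  have sum_w: "w $ 1 + w $ 2 = u * (x $ 1 + x $ 2) + v * (y $ 1 + y $ 2)"
    and shift_w: "1 + w $ 2 = u * (1 + x $ 2) + v * (1 + y $ 2)"
    using w[of 1] w[of 2] uv(3) by (simp_all add: algebra_simps)
  have "u * (- x $ 3) \<le> u * neg_part3 x"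
    by (rule mult_left_mono) (simp_all add: neg_part3_def uv)
  moreover have "v * (- y $ 3) \<le> v * neg_part3 y"
    by (rule mult_left_mono) (simp_all add: neg_part3_def uv)
  ultimately have "- w $ 3 \<le> u * neg_part3 x + v * neg_part3 y"
    using w[of 3] by simp
  then have "neg_part3 w \<le> u * neg_part3 x + v * neg_part3 y"
    using uv neg_part3_nonneg[of x] neg_part3_nonneg[of y] by (simp add: neg_part3_def)
  then have "(neg_part3 w)\<^sup>2 \<le> (u * neg_part3 x + v * neg_part3 y)\<^sup>2"
    using neg_part3_nonneg[of w] by (intro power_mono) auto
  also have "\<dots> \<le> (w $ 1 + w $ 2) * (1 + w $ 2)"
    unfolding sum_w shift_w using x y uv unfolding ex_acc_def by (intro sq_le_mult_conic_comb) auto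
  finally have "(neg_part3 w)\<^sup>2 \<le> (w $ 1 + w $ 2) * (1 + w $ 2)" .
  moreover have "0 \<le> w $ 1"
    using x y uv unfolding w ex_acc_def by simp
  moreover have "0 \<le> w $ 1 + w $ 2" "0 \<le> 1 + w $ 2"
    using x y uv unfolding sum_w shift_w ex_acc_def by simp_all
  ultimately show "u *\<^sub>R x + v *\<^sub>R y \<in> ex_acc"
    unfolding w_def[symmetric] ex_acc_def by blast
qed

lemma ex_acc_monotone:
  assumes "x \<in> ex_acc" and "nonneg3 (y - x)"
  shows "y \<in> ex_acc"
proof -
  have le: "x $ i \<le> y $ i" for i
    using assms(2) unfolding nonneg3_def by simp
  have "(neg_part3 y)\<^sup>2 \<le> (neg_part3 x)\<^sup>2"
    using le[of 3] neg_part3_nonneg[of y] by (intro power_mono) (auto simp: neg_part3_def)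
  also have "\<dots> \<le> (x $ 1 + x $ 2) * (1 + x $ 2)"
    using assms(1) unfolding ex_acc_def by simp
  also have "\<dots> \<le> (y $ 1 + y $ 2) * (1 + y $ 2)"
    using assms(1) le[of 1] le[of 2] unfolding ex_acc_def by (intro mult_mono) auto
  finally show ?thesis
    using assms(1) le[of 1] le[of 2] unfolding ex_acc_def by auto
qed

lemma ex_risk_le_price:
  assumes "z \<in> ex_payoffs" and "z + x \<in> ex_acc"
  shows "ex_risk x \<le> ex_price z"
proof -
  define y where "y = z + x"
  have y: "0 \<le> y $ 1"
    using assms unfolding y_def ex_acc_def by auto
  have "(neg_part3 x)\<^sup>2 \<le> (y $ 1 + y $ 2) * (1 + y $ 2)"
    using assms neg_part3_add_payoff unfolding y_def ex_acc_def by auto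
  also have "\<dots> \<le> (y $ 1 + y $ 2) * (1 + (y $ 1 + y $ 2))"
    using assms(2) y unfolding y_def ex_acc_def by (intro mult_left_mono) auto
  finally have "hroot (neg_part3 x) \<le> y $ 1 + y $ 2"
    using assms(2) unfolding y_def ex_acc_def by (intro hroot_le) auto
  then show ?thesis
    unfolding ex_risk_def ex_price_def y_def by simp
qed

lemma ex_sel_mem: "ex_sel x \<in> ex_payoffs" "ex_sel x + x \<in> ex_acc"
  and ex_price_ex_sel: "ex_price (ex_sel x) = ex_risk x"
proof -
  show "ex_sel x \<in> ex_payoffs"
    unfolding ex_payoffs_def ex_sel_def by simp
  then show "ex_sel x + x \<in> ex_acc"
    using hroot_nonneg hroot_eq[of "neg_part3 x"]
    by (simp add: ex_acc_def neg_part3_add_payoff) (simp add: ex_sel_def)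
  show "ex_price (ex_sel x) = ex_risk x"
    unfolding ex_price_def ex_risk_def ex_sel_def by simp
qed

lemma rho_ex_eq: "rho ex_acc ex_payoffs ex_price x = ereal (ex_risk x)"
  unfolding rho_def
proof (rule Inf_eqI)
  show "\<And>i. i \<in> {ereal (ex_price z) |z. z \<in> ex_payoffs \<and> z + x \<in> ex_acc} \<Longrightarrow> ereal (ex_risk x) \<le> i"
    using ex_risk_le_price by auto
  show "\<And>y. (\<And>i. i \<in> {ereal (ex_price z) |z. z \<in> ex_payoffs \<and> z + x \<in> ex_acc} \<Longrightarrow> y \<le> i)
          \<Longrightarrow> y \<le> ereal (ex_risk x)"
    using ex_sel_mem ex_price_ex_sel by (metis (mono_tags, lifting) mem_Collect_eq)
qed

lemma ex_sel_optimal: "ex_sel x \<in> optset ex_acc ex_payoffs ex_price x"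
  unfolding optset_def using ex_sel_mem ex_price_ex_sel rho_ex_eq by simp

lemma continuous_on_ex_sel: "continuous_on UNIV ex_sel"
  unfolding ex_sel_def
proof (rule continuous_on_vec_lambda)
  fix i :: 3
  show "continuous_on UNIV (\<lambda>x. if i = 1 then - x $ 1 else if i = 2 then hroot (neg_part3 x) - x $ 2 else 0)"
    by (cases "i = 1"; cases "i = 2") (auto intro!: continuous_intros)
qed

lemma admissible_ex: "admissible ex_acc ex_payoffs ex_price"
  unfolding admissible_def
proof (intro conjI)
  show "subspace ex_payoffs"
    unfolding subspace_def ex_payoffs_def by simp
  show "linear_functional_on ex_payoffs ex_price"
    unfolding linear_functional_on_def ex_price_def by (simp add: distrib_left)
  show "closed ex_acc" "convex ex_acc"
    by (fact closed_ex_acc convex_ex_acc)+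
  show "0 \<in> ex_acc"
    unfolding ex_acc_def neg_part3_def by simp
  show "\<forall>x y. x \<in> ex_acc \<and> nonneg3 (y - x) \<longrightarrow> y \<in> ex_acc"
    using ex_acc_monotone by blast
  show "\<forall>z\<in>ex_payoffs. nonneg3 z \<and> z \<noteq> 0 \<longrightarrow> 0 < ex_price z"
  proof (intro ballI impI)
    fix z assume z: "z \<in> ex_payoffs" "nonneg3 z \<and> z \<noteq> 0"
    then have "z $ 1 \<noteq> 0 \<or> z $ 2 \<noteq> 0"
      unfolding ex_payoffs_def by (auto simp: vec_eq_iff forall_3)
    then show "0 < ex_price z"
      using z unfolding nonneg3_def ex_price_def by (smt (verit))
  qed
  show "\<forall>x. rho ex_acc ex_payoffs ex_price x \<noteq> \<infinity> \<and> rho ex_acc ex_payoffs ex_price x \<noteq> - \<infinity>"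
    by (simp add: rho_ex_eq)
  show "continuous_on UNIV (\<lambda>x. real_of_ereal (rho ex_acc ex_payoffs ex_price x))"
    unfolding rho_ex_eq ex_risk_def by (simp add: continuous_intros)
qed

lemma optset_ex_unique_first:
  assumes "x $ 3 < 0" and "z \<in> optset ex_acc ex_payoffs ex_price x"
  shows "z $ 1 = - x $ 1"
proof -
  define y where "y = z + x"
  define \<sigma> where "\<sigma> = hroot (neg_part3 x)"
  have "neg_part3 x \<noteq> 0"
    using assms(1) unfolding neg_part3_def by simp
  then have "0 < \<sigma>" and \<sigma>: "\<sigma> * (1 + \<sigma>) = (neg_part3 x)\<^sup>2"
    unfolding \<sigma>_def by (simp_all add: hroot_pos hroot_eq)
  have z: "z \<in> ex_payoffs" "y \<in> ex_acc" "ex_price z = ex_risk x"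
    using assms(2) unfolding optset_def rho_ex_eq y_def by auto
  then have sum: "y $ 1 + y $ 2 = \<sigma>"
    unfolding y_def ex_price_def ex_risk_def \<sigma>_def by simp
  have "\<sigma> * (1 + \<sigma>) \<le> \<sigma> * (1 + y $ 2)"
    using z(2) \<sigma> sum neg_part3_add_payoff[OF z(1)] unfolding y_def ex_acc_def by simp
  then have "\<sigma> \<le> y $ 2"
    using \<open>0 < \<sigma>\<close> by simp
  then have "y $ 1 = 0"
    using sum z(2) unfolding ex_acc_def by simp
  then show ?thesis
    unfolding y_def by simp
qed

lemma not_lsc_ex: "\<not> lsc_at ex_payoffs (optset ex_acc ex_payoffs ex_price) 0"
proof
  assume lsc: "lsc_at ex_payoffs (optset ex_acc ex_payoffs ex_price) 0"
  define z0 :: "real^3" where "z0 = vector [1/2, -1/2, 0]"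
  define U where "U = ex_payoffs \<inter> ball z0 (1/4)"
  have "z0 \<in> optset ex_acc ex_payoffs ex_price 0"
    unfolding optset_def rho_ex_eq
    by (simp add: ex_payoffs_def ex_acc_def ex_price_def ex_risk_def neg_part3_def z0_def)
  moreover have "z0 \<in> U"
    unfolding U_def ex_payoffs_def z0_def by simp
  ultimately have "optset ex_acc ex_payoffs ex_price 0 \<inter> U \<noteq> {}"
    by blast
  moreover have "openin (top_of_set ex_payoffs) U"
    unfolding U_def by (rule openin_open_Int) simp
  ultimately obtain V where V: "open V" "0 \<in> V" "\<forall>y\<in>V. optset ex_acc ex_payoffs ex_price y \<inter> U \<noteq> {}"
    using lsc unfolding lsc_at_def by blast
  obtain e where "e > 0" "ball 0 e \<subseteq> V"
    using V(1,2) open_contains_ball by blast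
  define y :: "real^3" where "y = (- e / 2) *\<^sub>R axis 3 1"
  have "y \<in> ball 0 e"
    using \<open>e > 0\<close> unfolding y_def by simp
  with \<open>ball 0 e \<subseteq> V\<close> have "y \<in> V"
    by blast
  then obtain z where z: "z \<in> optset ex_acc ex_payoffs ex_price y" "z \<in> U"
    using V(3) by blast
  have "z $ 1 = 0"
    using optset_ex_unique_first[OF _ z(1)] \<open>e > 0\<close> unfolding y_def by (simp add: axis_def)
  moreover have "\<bar>(z0 - z) $ 1\<bar> < 1/4"
    using z(2) component_le_norm_cart[of "z0 - z" 1] unfolding U_def by (simp add: dist_norm)
  ultimately show False
    unfolding z0_def by simp
qed

theorem mainTheorem1:
  shows "\<exists>(A :: (real^3) set) (M :: (real^3) set) (p :: real^3 \<Rightarrow> real).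
           admissible A M p \<and>
           (\<exists>x. \<not> lsc_at M (optset A M p) x) \<and>
           (\<exists>s :: real^3 \<Rightarrow> real^3. continuous_on UNIV s \<and> (\<forall>x. s x \<in> optset A M p x))"
  using admissible_ex not_lsc_ex continuous_on_ex_sel ex_sel_optimal by blast

end
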